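(* Let $H\in\mathbb C^{d\times d}$ be Hermitian with eigenvalues $\lambda_0\le\lambda_1\le\dots\le\lambda_{d-1}$ and corresponding orthonormal eigenvectors $\ket{\phi_0},\dots,\ket{\phi_{d-1}}$. Fix $j$ and let $\gamma_j:=\min\{|\lambda_j-\lambda_{j-1}|,|\lambda_j-\lambda_{j+1}|\}$ with $\lambda_{-1}:=-\infty$, $\lambda_d:=\infty$. Let $0<t\le\frac{1}{4\|H\|}$, $U=\exp(-iHt)$, and let $\widetilde U$ be a unitary with $\|\widetilde U-U\|\le\frac{t\epsilon}{9}\le\frac13$ for some $0\le\epsilon\le\gamma_j/2$. Let $\ket{\widetilde\phi_j}$ be an eigenvector of the effective Hamiltonian $\widetilde H=\frac it\log\widetilde U$ associated with its $j$-th smallest eigenvalue. Then $$|\langle\phi_j|\widetilde\phi_j\rangle|^2\ge 1-\frac{\pi^2\epsilon^2}{\gamma_j^2}.$$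
   Context: $\|\cdot\|$ is the spectral norm. For a matrix $M$ with $\|M-\mathbb 1\|<1$, $\log M:=\sum_{k=1}^\infty\frac{(-1)^{k+1}}{k}(M-\mathbb 1)^k$; under the stated hypotheses this series converges and $\widetilde H=\frac it\log\widetilde U$ is Hermitian, with eigenvalues ordered nondecreasingly and indexed from $0$. *)

theory Defs
  imports "HOL-Analysis.Analysis" "HOL-Library.Extended_Real"
begin

type_synonym 'n cmat = "complex ^ 'n ^ 'n"

definition cadj :: "'n::finite cmat \<Rightarrow> 'n cmat" where
  "cadj A = (\<chi> i j. cnj (A $ j $ i))"

definition hermitian :: "'n::finite cmat \<Rightarrow> bool" where
  "hermitian A \<longleftrightarrow> cadj A = A"

definition unitary :: "'n::finite cmat \<Rightarrow> bool" where
  "unitary U \<longleftrightarrow> U ** cadj U = mat 1 \<and> cadj U ** U = mat 1"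

definition snorm :: "'n::finite cmat \<Rightarrow> real" where
  "snorm A = onorm (\<lambda>x. A *v x)"

definition cscale :: "complex \<Rightarrow> 'n::finite cmat \<Rightarrow> 'n cmat" where
  "cscale c A = (\<chi> i j. c * A $ i $ j)"

fun matpow :: "'n::finite cmat \<Rightarrow> nat \<Rightarrow> 'n cmat" where
  "matpow A 0 = mat 1"
| "matpow A (Suc k) = A ** matpow A k"

definition mexp :: "'n::finite cmat \<Rightarrow> 'n cmat" where
  "mexp A = (\<Sum>k. (1 / fact k) *\<^sub>R matpow A k)"

definition mlog :: "'n::finite cmat \<Rightarrow> 'n cmat" where
  "mlog M = (\<Sum>k. ((-1) ^ k / real (Suc k)) *\<^sub>R matpow (M - mat 1) (Suc k))"

definition cinner :: "complex ^ 'n::finite \<Rightarrow> complex ^ 'n \<Rightarrow> complex" where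
  "cinner x y = (\<Sum>i\<in>UNIV. cnj (x $ i) * y $ i)"

definition ordered_eigensystem ::
  "'n::finite cmat \<Rightarrow> (nat \<Rightarrow> real) \<Rightarrow> (nat \<Rightarrow> complex ^ 'n) \<Rightarrow> bool" where
  "ordered_eigensystem A lam phi \<longleftrightarrow>
     (\<forall>k l. k \<le> l \<longrightarrow> l < CARD('n) \<longrightarrow> lam k \<le> lam l) \<and>
     (\<forall>k < CARD('n). A *v phi k = complex_of_real (lam k) *s phi k) \<and>
     (\<forall>k < CARD('n). \<forall>l < CARD('n). cinner (phi k) (phi l) = (if k = l then 1 else 0))"

definition spec_gap :: "(nat \<Rightarrow> real) \<Rightarrow> nat \<Rightarrow> nat \<Rightarrow> ereal" where
  "spec_gap lam d j =
     min (if j = 0 then \<infinity> else ereal \<bar>lam j - lam (j - 1)\<bar>)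
         (if j + 1 = d then \<infinity> else ereal \<bar>lam j - lam (j + 1)\<bar>)"

end

(* Because t \<parallel>H\<parallel> \<le> 1/4, every eigenvalue of U = exp(-iHt) lies on the arc where the
   logarithm series inverts the exponential, so (i/t) log U = H exactly. The logarithm is
   Lipschitz with constant 12/5 near the identity, hence \<parallel>H' - H\<parallel> \<le> 4\<epsilon>/15 for the effective
   Hamiltonian H' = (i/t) log U'. By Weyl's inequality its j-th eigenvalue \<mu> lies within 4\<epsilon>/15
   of \<lambda>_j, so \<mu> stays at distance at least \<gamma>_j - 4\<epsilon>/15 \<ge> 13\<gamma>_j/15 from every other
   eigenvalue of H. Expanding the eigenvector of H' in the eigenbasis of H, its residual
   \<parallel>(H - \<mu>) \<phi>'\<parallel> \<le> 4\<epsilon>/15 bounds its weight off \<phi>_j. *)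

theory Submission
  imports Defs
begin

section \<open>The Hermitian inner product\<close>

lemma cinner_commute: "cinner x y = cnj (cinner y x)"
  by (simp add: cinner_def mult.commute)

lemma cinner_smult_right: "cinner x (c *s y) = c * cinner x y"
  by (simp add: cinner_def sum_distrib_left algebra_simps)

lemma cinner_smult_left: "cinner (c *s x) y = cnj c * cinner x y"
  by (simp add: cinner_def sum_distrib_left algebra_simps)

lemma cinner_add_right: "cinner x (y + z) = cinner x y + cinner x z"
  by (simp add: cinner_def sum.distrib algebra_simps)

lemma cinner_diff_right: "cinner x (y - z) = cinner x y - cinner x z"
  by (simp add: cinner_def sum_subtractf algebra_simps)

lemma cinner_sum_right: "cinner x (sum f A) = (\<Sum>a\<in>A. cinner x (f a))"
  by (induction A rule: infinite_finite_induct)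
    (auto simp: cinner_def cinner_add_right sum.distrib algebra_simps)

lemma inner_eq_Re_cinner: "inner x y = Re (cinner x y)"
  by (simp add: cinner_def inner_vec_def inner_complex_def Re_sum)

lemma cinner_self: "cinner x x = complex_of_real ((norm x)\<^sup>2)"
proof -
  have "cinner x x = (\<Sum>i\<in>UNIV. complex_of_real ((cmod (x $ i))\<^sup>2))"
    unfolding cinner_def by (intro sum.cong refl) (simp only: complex_norm_square mult.commute)
  also have "\<dots> = complex_of_real ((norm x)\<^sup>2)"
    by (simp add: norm_vec_def L2_set_def sum_nonneg flip: of_real_power of_real_sum)
  finally show ?thesis .
qed

lemma cinner_mult_cnj_self: "cinner x y * cinner y x = complex_of_real ((cmod (cinner x y))\<^sup>2)"
  by (metis cinner_commute complex_norm_square)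

lemma cinner_eq_0_if_inner_eq_0:
  assumes "inner x v = 0" and "inner x (\<i> *s v) = 0"
  shows "cinner v x = 0"
  using assms unfolding inner_eq_Re_cinner cinner_smult_right
  by (subst (asm) (1 2) cinner_commute) (simp add: complex_eq_iff)

lemma norm_smult_complex: "norm (c *s (x :: complex ^ 'n::finite)) = cmod c * norm x"
  unfolding norm_vec_def by (simp add: norm_mult L2_set_right_distrib)

lemma scaleR_eq_smult_of_real: "c *\<^sub>R (x :: complex ^ 'n::finite) = complex_of_real c *s x"
  by (simp add: vec_eq_iff) (simp add: scaleR_conv_of_real)

lemma smult_sum_right: "c *s (\<Sum>k\<in>K. v k) = (\<Sum>k\<in>K. c *s (v k :: complex ^ 'n::finite))"
  by (simp add: vec_eq_iff sum_component sum_distrib_left)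

lemma matrix_vector_mult_smult: "A *v (c *s x) = c *s (A *v (x :: 'a::comm_ring_1 ^ 'n::finite))"
  by (simp add: vec_eq_iff matrix_vector_mult_def sum_distrib_left algebra_simps)

lemma matrix_vector_mult_sum: "A *v (\<Sum>k\<in>K. v k) = (\<Sum>k\<in>K. A *v (v k :: 'a::comm_ring_1 ^ 'n::finite))"
  by (induction K rule: infinite_finite_induct) (auto simp: matrix_vector_right_distrib)

lemma cscale_matrix_vector_mult: "cscale c A *v x = c *s (A *v x)"
  by (simp add: vec_eq_iff matrix_vector_mult_def cscale_def sum_distrib_left algebra_simps)

section \<open>Orthonormal bases\<close>

definition orthonormal_basis :: "(nat \<Rightarrow> complex ^ 'n::finite) \<Rightarrow> bool" where
  "orthonormal_basis f \<longleftrightarrow>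
     (\<forall>k < CARD('n). \<forall>l < CARD('n). cinner (f k) (f l) = (if k = l then 1 else 0))"

lemma ordered_eigensystem_orthonormal_basis: "ordered_eigensystem A lam phi \<Longrightarrow> orthonormal_basis phi"
  unfolding ordered_eigensystem_def orthonormal_basis_def by blast

lemma ordered_eigensystemD:
  assumes "ordered_eigensystem (A :: 'n::finite cmat) lam phi"
  shows "\<And>k l. k \<le> l \<Longrightarrow> l < CARD('n) \<Longrightarrow> lam k \<le> lam l"
    and "\<forall>k < CARD('n). A *v phi k = complex_of_real (lam k) *s phi k"
  using assms unfolding ordered_eigensystem_def by blast+

lemma orthonormal_basis_norm:
  assumes "orthonormal_basis f" and "k < CARD('n)"
  shows "norm (f k :: complex ^ 'n::finite) = 1"
proof -
  have "complex_of_real ((norm (f k))\<^sup>2) = 1"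
    using assms cinner_self[of "f k"] unfolding orthonormal_basis_def by simp
  then have "(norm (f k))\<^sup>2 = 1"
    using of_real_eq_1_iff by blast
  then show ?thesis
    using norm_ge_zero[of "f k"] by (simp add: power2_eq_1_iff)
qed

lemma orthonormal_basis_inner:
  fixes f :: "nat \<Rightarrow> complex ^ 'n::finite"
  assumes "orthonormal_basis f" and "k < CARD('n)" and "l < CARD('n)"
  shows "inner (f k) (f l) = (if k = l then 1 else 0)"
    and "inner (\<i> *s f k) (\<i> *s f l) = (if k = l then 1 else 0)"
    and "inner (f k) (\<i> *s f l) = 0"
    and "inner (\<i> *s f k) (f l) = 0"
  using assms unfolding orthonormal_basis_def inner_eq_Re_cinner
  by (auto simp: cinner_smult_left cinner_smult_right)

text \<open>\<open>complex ^ 'n\<close> is only a real inner product space in HOL-Analysis. Over the reals the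
  vectors \<open>f k\<close> and \<open>\<i> f k\<close> are orthonormal, so counting dimensions shows they span.\<close>

lemma orthonormal_basis_real_span:
  fixes f :: "nat \<Rightarrow> complex ^ 'n::finite"
  assumes onb: "orthonormal_basis f"
  shows "span (f ` {..<CARD('n)} \<union> (\<lambda>k. \<i> *s f k) ` {..<CARD('n)}) = UNIV"
    (is "span (?A \<union> ?B) = _")
proof -
  note ip = orthonormal_basis_inner[OF onb]
  have inj: "inj_on f {..<CARD('n)}" "inj_on (\<lambda>k. \<i> *s f k) {..<CARD('n)}"
    using ip(1,2) by (metis (no_types, lifting) inj_onI lessThan_iff zero_neq_one)+
  have disj: "?A \<inter> ?B = {}"
    using ip(1,3) by (force simp del: vector_smult_assoc)
  have card: "card (?A \<union> ?B) = DIM(complex ^ 'n)"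
    using card_Un_disjoint[OF _ _ disj] card_image[OF inj(1)] card_image[OF inj(2)] by simp
  have "pairwise orthogonal (?A \<union> ?B)"
    using ip unfolding pairwise_def orthogonal_def by (auto simp del: vector_smult_assoc)
  moreover have "0 \<notin> ?A \<union> ?B"
    using ip(1,2) by force
  ultimately have "independent (?A \<union> ?B)"
    by (rule pairwise_orthogonal_independent)
  then show ?thesis
    using card_eq_dim[of "?A \<union> ?B" UNIV] card by auto
qed

lemma orthonormal_basis_expansion:
  fixes f :: "nat \<Rightarrow> complex ^ 'n::finite"
  assumes onb: "orthonormal_basis f"
  shows "x = (\<Sum>k<CARD('n). cinner (f k) x *s f k)"
proof -
  define y where "y = x - (\<Sum>k<CARD('n). cinner (f k) x *s f k)"
  have coeff: "cinner (f l) y = 0" if "l < CARD('n)" for l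
  proof -
    have "cinner (f l) (\<Sum>k<CARD('n). cinner (f k) x *s f k)
        = (\<Sum>k<CARD('n). cinner (f k) x * (if l = k then 1 else 0))"
      using onb that unfolding orthonormal_basis_def cinner_sum_right
      by (intro sum.cong) (auto simp: cinner_smult_right)
    then show ?thesis
      using that by (simp add: y_def cinner_diff_right if_distrib cong: if_cong)
  qed
  have orth: "orthogonal y z" if "z \<in> f ` {..<CARD('n)} \<union> (\<lambda>k. \<i> *s f k) ` {..<CARD('n)}" for z
    using that coeff unfolding orthogonal_def inner_eq_Re_cinner
    by (subst cinner_commute) (auto simp: cinner_smult_left)
  have "orthogonal y y"
    using orthogonal_to_span[OF _ orth] orthonormal_basis_real_span[OF onb] by blast
  then show ?thesis
    by (simp add: y_def orthogonal_self)
qed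

lemma orthonormal_basis_coeff:
  fixes f :: "nat \<Rightarrow> complex ^ 'n::finite"
  assumes "orthonormal_basis f" and "l < CARD('n)"
  shows "cinner (f l) (\<Sum>k<CARD('n). b k *s f k) = b l"
proof -
  have "cinner (f l) (\<Sum>k<CARD('n). b k *s f k) = (\<Sum>k<CARD('n). b k * (if l = k then 1 else 0))"
    using assms unfolding orthonormal_basis_def cinner_sum_right
    by (intro sum.cong) (auto simp: cinner_smult_right)
  with assms(2) show ?thesis
    by (simp add: if_distrib cong: if_cong)
qed

lemma parseval:
  fixes f :: "nat \<Rightarrow> complex ^ 'n::finite"
  assumes onb: "orthonormal_basis f"
  shows "(norm x)\<^sup>2 = (\<Sum>k<CARD('n). (cmod (cinner (f k) x))\<^sup>2)"
proof -
  have "complex_of_real ((norm x)\<^sup>2) = cinner x (\<Sum>k<CARD('n). cinner (f k) x *s f k)"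
    using orthonormal_basis_expansion[OF onb, of x] cinner_self[of x] by simp
  also have "\<dots> = complex_of_real (\<Sum>k<CARD('n). (cmod (cinner (f k) x))\<^sup>2)"
    unfolding cinner_sum_right cinner_smult_right of_real_sum
    by (intro sum.cong refl) (metis cinner_mult_cnj_self mult.commute)
  finally show ?thesis
    by (simp only: of_real_eq_iff)
qed

lemma parseval_combination:
  fixes f :: "nat \<Rightarrow> complex ^ 'n::finite"
  assumes "orthonormal_basis f"
  shows "(norm (\<Sum>k<CARD('n). b k *s f k))\<^sup>2 = (\<Sum>k<CARD('n). (cmod (b k))\<^sup>2)"
  unfolding parseval[OF assms] using orthonormal_basis_coeff[OF assms] by simp

lemma eigenbasis_matrix_vector_mult:
  fixes f :: "nat \<Rightarrow> complex ^ 'n::finite"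
  assumes "orthonormal_basis f" and "\<forall>k < CARD('n). A *v f k = a k *s f k"
  shows "A *v x = (\<Sum>k<CARD('n). (a k * cinner (f k) x) *s f k)"
  by (subst orthonormal_basis_expansion[OF assms(1), of x])
    (simp add: matrix_vector_mult_sum matrix_vector_mult_smult assms(2) mult.commute)

lemma eigenbasis_eq:
  fixes f :: "nat \<Rightarrow> complex ^ 'n::finite"
  assumes "orthonormal_basis f"
    and "\<forall>k < CARD('n). A *v f k = a k *s f k"
    and "\<forall>k < CARD('n). B *v f k = a k *s f k"
  shows "A *v x = B *v x"
  using eigenbasis_matrix_vector_mult[OF assms(1,2)] eigenbasis_matrix_vector_mult[OF assms(1,3)]
  by simp

lemma eigenbasis_norm_le:
  fixes f :: "nat \<Rightarrow> complex ^ 'n::finite"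
  assumes onb: "orthonormal_basis f" and "\<forall>k < CARD('n). A *v f k = a k *s f k"
    and "\<And>k. k < CARD('n) \<Longrightarrow> cmod (a k) \<le> r"
  shows "norm (A *v x) \<le> r * norm x"
proof -
  have "(norm (A *v x))\<^sup>2 = (\<Sum>k<CARD('n). (cmod (a k))\<^sup>2 * (cmod (cinner (f k) x))\<^sup>2)"
    unfolding eigenbasis_matrix_vector_mult[OF assms(1,2)] parseval_combination[OF onb]
    by (simp add: norm_mult power_mult_distrib)
  also have "\<dots> \<le> (\<Sum>k<CARD('n). r\<^sup>2 * (cmod (cinner (f k) x))\<^sup>2)"
    using assms(3) by (intro sum_mono mult_right_mono power_mono) auto
  also have "\<dots> = (r * norm x)\<^sup>2"
    by (simp add: parseval[OF onb] sum_distrib_left power_mult_distrib)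
  finally have sq: "(norm (A *v x))\<^sup>2 \<le> (r * norm x)\<^sup>2" .
  have "0 \<le> r"
    by (rule order_trans[OF norm_ge_zero assms(3)[OF zero_less_card_finite]])
  then show ?thesis
    by (rule power2_le_imp_le[OF sq mult_nonneg_nonneg[OF _ norm_ge_zero]])
qed

lemma ordered_eigensystem_quadratic_form:
  fixes A :: "'n::finite cmat"
  assumes "ordered_eigensystem A lam phi"
  shows "Re (cinner x (A *v x)) = (\<Sum>k<CARD('n). lam k * (cmod (cinner (phi k) x))\<^sup>2)"
proof -
  have "cinner x (A *v x)
      = (\<Sum>k<CARD('n). complex_of_real (lam k) * (cinner (phi k) x * cinner x (phi k)))"
    unfolding eigenbasis_matrix_vector_mult[OF ordered_eigensystem_orthonormal_basis[OF assms]
        ordered_eigensystemD(2)[OF assms]] cinner_sum_right cinner_smult_right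
    by (simp add: mult.assoc)
  then show ?thesis
    by (simp add: cinner_mult_cnj_self Re_sum)
qed


section \<open>Perturbation of eigenvalues\<close>

lemma exists_cinner_orthogonal:
  fixes V :: "(complex ^ 'n::finite) set"
  assumes "finite V" and "card V < CARD('n)"
  obtains x where "x \<noteq> 0" and "\<And>v. v \<in> V \<Longrightarrow> cinner v x = 0"
proof -
  define Q where "Q = V \<union> (\<lambda>v. \<i> *s v) ` V"
  have "card Q \<le> card V + card V"
    unfolding Q_def by (intro order.trans[OF card_Un_le] add_mono card_image_le order.refl assms(1))
  then have "dim Q < DIM(complex ^ 'n)"
    using dim_le_card[of Q Q] span_superset[of Q] assms unfolding Q_def by simp
  then obtain x :: "complex ^ 'n" where "x \<noteq> 0" and orth: "\<And>y. y \<in> span Q \<Longrightarrow> orthogonal x y"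
    using orthogonal_to_subspace_exists by blast
  have "cinner v x = 0" if "v \<in> V" for v
    using orth[OF span_base] that unfolding orthogonal_def Q_def
    by (intro cinner_eq_0_if_inner_eq_0) auto
  with \<open>x \<noteq> 0\<close> show thesis
    by (rule that)
qed

lemma ordered_eigensystem_Rayleigh_le:
  fixes A :: "'n::finite cmat"
  assumes oes: "ordered_eigensystem A lam phi" and "j < CARD('n)"
    and orth: "\<And>l. j < l \<Longrightarrow> l < CARD('n) \<Longrightarrow> cinner (phi l) x = 0"
  shows "Re (cinner x (A *v x)) \<le> lam j * (norm x)\<^sup>2"
proof -
  have "Re (cinner x (A *v x)) = (\<Sum>k<CARD('n). lam k * (cmod (cinner (phi k) x))\<^sup>2)"
    by (rule ordered_eigensystem_quadratic_form[OF oes])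
  also have "\<dots> \<le> (\<Sum>k<CARD('n). lam j * (cmod (cinner (phi k) x))\<^sup>2)"
  proof (intro sum_mono)
    fix k assume "k \<in> {..<CARD('n)}"
    then show "lam k * (cmod (cinner (phi k) x))\<^sup>2 \<le> lam j * (cmod (cinner (phi k) x))\<^sup>2"
      using orth[of k] ordered_eigensystemD(1)[OF oes, of k j] \<open>j < CARD('n)\<close>
      by (cases "k \<le> j") (simp_all add: mult_right_mono)
  qed
  also have "\<dots> = lam j * (norm x)\<^sup>2"
    by (simp add: parseval[OF ordered_eigensystem_orthonormal_basis[OF oes]] sum_distrib_left)
  finally show ?thesis .
qed

lemma ordered_eigensystem_Rayleigh_ge:
  fixes A :: "'n::finite cmat"
  assumes oes: "ordered_eigensystem A lam phi"
    and orth: "\<And>l. l < j \<Longrightarrow> cinner (phi l) x = 0"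
  shows "lam j * (norm x)\<^sup>2 \<le> Re (cinner x (A *v x))"
proof -
  have "lam j * (norm x)\<^sup>2 = (\<Sum>k<CARD('n). lam j * (cmod (cinner (phi k) x))\<^sup>2)"
    by (simp add: parseval[OF ordered_eigensystem_orthonormal_basis[OF oes]] sum_distrib_left)
  also have "\<dots> \<le> (\<Sum>k<CARD('n). lam k * (cmod (cinner (phi k) x))\<^sup>2)"
  proof (intro sum_mono)
    fix k assume "k \<in> {..<CARD('n)}"
    then show "lam j * (cmod (cinner (phi k) x))\<^sup>2 \<le> lam k * (cmod (cinner (phi k) x))\<^sup>2"
      using orth[of k] ordered_eigensystemD(1)[OF oes, of j k]
      by (cases "j \<le> k") (simp_all add: mult_right_mono)
  qed
  also have "\<dots> = Re (cinner x (A *v x))"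
    by (rule ordered_eigensystem_quadratic_form[OF oes, symmetric])
  finally show ?thesis .
qed

text \<open>Weyl's inequality, by the Courant--Fischer argument: a test vector orthogonal to the
  eigenvectors of \<open>A\<close> above \<open>j\<close> and to those of \<open>B\<close> below \<open>j\<close> exists by counting dimensions.\<close>

lemma ordered_eigensystem_perturbation:
  fixes A B :: "'n::finite cmat"
  assumes oa: "ordered_eigensystem A la pa" and ob: "ordered_eigensystem B lb pb"
    and j: "j < CARD('n)" and close: "\<forall>x. norm (A *v x - B *v x) \<le> \<delta> * norm x"
  shows "lb j \<le> la j + \<delta>"
proof -
  define V where "V = pa ` {j<..<CARD('n)} \<union> pb ` {..<j}"
  have "card V \<le> card {j<..<CARD('n)} + card {..<j}"
    unfolding V_def by (intro order.trans[OF card_Un_le] add_mono card_image_le) auto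
  also have "\<dots> < CARD('n)"
    using j by simp
  finally obtain x where "x \<noteq> 0" and orth: "\<And>v. v \<in> V \<Longrightarrow> cinner v x = 0"
    using exists_cinner_orthogonal[of V] unfolding V_def by blast
  have "lb j * (norm x)\<^sup>2 \<le> Re (cinner x (B *v x))"
    by (rule ordered_eigensystem_Rayleigh_ge[OF ob]) (use orth in \<open>auto simp: V_def\<close>)
  also have "\<dots> = Re (cinner x (A *v x)) + inner x (B *v x - A *v x)"
    by (simp add: inner_eq_Re_cinner cinner_diff_right)
  also have "\<dots> \<le> la j * (norm x)\<^sup>2 + norm x * (\<delta> * norm x)"
  proof (rule add_mono)
    show "Re (cinner x (A *v x)) \<le> la j * (norm x)\<^sup>2"
      by (rule ordered_eigensystem_Rayleigh_le[OF oa j]) (use orth in \<open>auto simp: V_def\<close>)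
    have "inner x (B *v x - A *v x) \<le> norm x * norm (A *v x - B *v x)"
      using norm_cauchy_schwarz[of x "B *v x - A *v x"] by (simp add: norm_minus_commute)
    also have "\<dots> \<le> norm x * (\<delta> * norm x)"
      by (rule mult_left_mono[OF close[rule_format] norm_ge_zero])
    finally show "inner x (B *v x - A *v x) \<le> norm x * (\<delta> * norm x)" .
  qed
  also have "\<dots> = (la j + \<delta>) * (norm x)\<^sup>2"
    by (simp add: algebra_simps power2_eq_square)
  finally show ?thesis
    by (rule mult_right_le_imp_le) (use \<open>x \<noteq> 0\<close> in simp)
qed


section \<open>Matrix power series\<close>

lemma scaleR_matrix_vector_mult: "(c *\<^sub>R M) *v x = c *\<^sub>R (M *v (x :: complex ^ 'n::finite))"
  by (simp add: vec_eq_iff matrix_vector_mult_def scaleR_sum_right)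

lemma bounded_linear_matrix_vector_mult_left: "bounded_linear (\<lambda>M :: 'n::finite cmat. M *v x)"
  unfolding linear_conv_bounded_linear[symmetric]
  by (intro linearI) (simp_all add: matrix_vector_mult_add_rdistrib scaleR_matrix_vector_mult)

lemma bounded_linear_smult_left: "bounded_linear (\<lambda>c :: complex. c *s (v :: complex ^ 'n::finite))"
  unfolding linear_conv_bounded_linear[symmetric]
  by (intro linearI) (simp_all add: vector_sadd_rdistrib vec_eq_iff)

lemma norm_matrix_vector_mult_le_snorm: "norm (M *v x) \<le> snorm M * norm x"
  unfolding snorm_def by (rule onorm[OF matrix_vector_mul_bounded_linear])

lemma matpow_Suc_matrix_vector_mult: "matpow A (Suc n) *v x = A *v (matpow A n *v x)"
  by (simp add: matrix_vector_mul_assoc)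

lemma matpow_eigenvector:
  assumes "A *v v = a *s v"
  shows "matpow A n *v v = a ^ n *s v"
  by (induction n)
    (simp_all del: matpow.simps add: matpow_Suc_matrix_vector_mult matrix_vector_mult_smult assms,
     simp add: vector_smult_assoc)

lemma norm_matpow_matrix_vector_mult_le:
  assumes "\<forall>y. norm (A *v y) \<le> r * norm y" and "0 \<le> r"
  shows "norm (matpow A n *v y) \<le> r ^ n * norm y"
proof (induction n)
  case (Suc n)
  have "norm (matpow A (Suc n) *v y) \<le> r * norm (matpow A n *v y)"
    unfolding matpow_Suc_matrix_vector_mult using assms(1) by blast
  also have "\<dots> \<le> r * (r ^ n * norm y)"
    using Suc assms(2) by (rule mult_left_mono)
  finally show ?case
    by simp
qed simp

lemma norm_matpow_diff_le:
  assumes A: "\<forall>y. norm (A *v y) \<le> r * norm y" and B: "\<forall>y. norm (B *v y) \<le> r * norm y"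
    and AB: "\<forall>y. norm (A *v y - B *v y) \<le> \<eta> * norm y" and "0 \<le> r" and "0 \<le> \<eta>"
  shows "norm (matpow A n *v y - matpow B n *v y) \<le> real n * r ^ (n - 1) * \<eta> * norm y"
proof (induction n)
  case (Suc n)
  let ?a = "matpow A n *v y" and ?b = "matpow B n *v y"
  have "matpow A (Suc n) *v y - matpow B (Suc n) *v y = A *v (?a - ?b) + (A *v ?b - B *v ?b)"
    unfolding matpow_Suc_matrix_vector_mult matrix_vector_mult_diff_distrib by simp
  then have "norm (matpow A (Suc n) *v y - matpow B (Suc n) *v y)
      \<le> norm (A *v (?a - ?b)) + norm (A *v ?b - B *v ?b)"
    by (simp only: norm_triangle_ineq)
  also have "\<dots> \<le> r * (real n * r ^ (n - 1) * \<eta> * norm y) + \<eta> * (r ^ n * norm y)"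
  proof (rule add_mono)
    show "norm (A *v (?a - ?b)) \<le> r * (real n * r ^ (n - 1) * \<eta> * norm y)"
      using A[rule_format, of "?a - ?b"] mult_left_mono[OF Suc \<open>0 \<le> r\<close>] by linarith
    show "norm (A *v ?b - B *v ?b) \<le> \<eta> * (r ^ n * norm y)"
      using AB[rule_format, of ?b]
        mult_left_mono[OF norm_matpow_matrix_vector_mult_le[OF B \<open>0 \<le> r\<close>, of n y] \<open>0 \<le> \<eta>\<close>]
      by linarith
  qed
  also have "\<dots> = real (Suc n) * r ^ (Suc n - 1) * \<eta> * norm y"
    by (cases n) (simp_all add: algebra_simps)
  finally show ?case .
qed simp

text \<open>The norm on \<open>'n cmat\<close> is the Euclidean (Frobenius) norm, not the operator norm; it is
  bounded through the entries, \<open>|M\<^sub>i\<^sub>j| \<le> \<parallel>M e\<^sub>j\<parallel>\<close>.\<close>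

lemma norm_matpow_le:
  fixes A :: "'n::finite cmat"
  assumes "\<forall>y. norm (A *v y) \<le> r * norm y" and "0 \<le> r"
  shows "norm (matpow A n) \<le> real CARD('n) ^ 2 * r ^ n"
proof -
  have entry: "cmod (matpow A n $ i $ j) \<le> r ^ n" for i j
  proof -
    have "matpow A n $ i $ j = (matpow A n *v axis j 1) $ i"
      by (simp add: matrix_vector_mult_def axis_def if_distrib cong: if_cong)
    then have "cmod (matpow A n $ i $ j) \<le> norm (matpow A n *v axis j 1)"
      using Finite_Cartesian_Product.norm_nth_le[of "matpow A n *v axis j 1" i] by simp
    also have "\<dots> \<le> r ^ n"
      using norm_matpow_matrix_vector_mult_le[OF assms, of n "axis j 1"]
      by (simp add: norm_eq_1 inner_axis')
    finally show ?thesis .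
  qed
  have "norm (matpow A n) \<le> (\<Sum>i\<in>UNIV. \<Sum>j\<in>(UNIV :: 'n set). cmod (matpow A n $ i $ j))"
    unfolding norm_vec_def
    by (rule order.trans[OF L2_set_le_sum sum_mono]) (simp_all add: L2_set_le_sum)
  also have "\<dots> \<le> (\<Sum>i\<in>(UNIV :: 'n set). \<Sum>j\<in>(UNIV :: 'n set). r ^ n)"
    by (intro sum_mono entry)
  finally show ?thesis
    by (simp add: power2_eq_square)
qed

lemma mexp_eigenvector:
  fixes X :: "'n::finite cmat"
  assumes "\<forall>y. norm (X *v y) \<le> s * norm y" and "0 \<le> s" and "X *v v = z *s v"
  shows "mexp X *v v = exp z *s v"
proof -
  have "summable (\<lambda>m. real CARD('n) ^ 2 * (inverse (fact m) * s ^ m))"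
    by (intro summable_mult summable_exp)
  moreover have "norm ((1 / fact m) *\<^sub>R matpow X m) \<le> real CARD('n) ^ 2 * (inverse (fact m) * s ^ m)"
    for m
    using mult_left_mono[OF norm_matpow_le[OF assms(1,2), of m], of "inverse (fact m)"]
    by (simp add: field_simps)
  ultimately have "summable (\<lambda>m. (1 / fact m) *\<^sub>R matpow X m)"
    by (rule summable_comparison_test'[where N = 0])
  then have "mexp X *v v = (\<Sum>m. ((1 / fact m) *\<^sub>R matpow X m) *v v)"
    unfolding mexp_def by (rule bounded_linear.suminf[OF bounded_linear_matrix_vector_mult_left])
  also have "\<dots> = (\<Sum>m. (z ^ m /\<^sub>R fact m) *s v)"
    unfolding scaleR_matrix_vector_mult matpow_eigenvector[OF assms(3)]
    by (intro arg_cong[where f = suminf] ext)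
      (simp add: vec_eq_iff, simp add: scaleR_conv_of_real divide_inverse)
  also have "\<dots> = exp z *s v"
    using bounded_linear.sums[OF bounded_linear_smult_left exp_converges] by (rule sums_unique[symmetric])
  finally show ?thesis .
qed


lemma mlog_matrix_vector_mult_sums:
  fixes M :: "'n::finite cmat"
  assumes "\<forall>y. norm ((M - mat 1) *v y) \<le> r * norm y" and "0 \<le> r" and "r < 1"
  shows "(\<lambda>m. ((-1) ^ m / real (Suc m)) *\<^sub>R (matpow (M - mat 1) (Suc m) *v x)) sums (mlog M *v x)"
proof -
  let ?f = "\<lambda>m. ((-1) ^ m / real (Suc m)) *\<^sub>R matpow (M - mat 1) (Suc m)"
  have "summable (\<lambda>m. real CARD('n) ^ 2 * r ^ Suc m)"
    using assms(2,3) by (intro summable_mult summable_ignore_initial_segment[of _ 1]) simp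
  moreover have "norm (?f m) \<le> real CARD('n) ^ 2 * r ^ Suc m" for m
  proof -
    have "norm (?f m) = (1 / real (Suc m)) * norm (matpow (M - mat 1) (Suc m))"
      by (simp add: abs_mult power_abs)
    also have "\<dots> \<le> norm (matpow (M - mat 1) (Suc m))"
      by (rule mult_left_le_one_le) simp_all
    also have "\<dots> \<le> real CARD('n) ^ 2 * r ^ Suc m"
      by (rule norm_matpow_le[OF assms(1,2)])
    finally show ?thesis .
  qed
  ultimately have "summable ?f"
    by (rule summable_comparison_test'[where N = 0])
  then have "?f sums mlog M"
    unfolding mlog_def by (rule summable_sums)
  from bounded_linear.sums[OF bounded_linear_matrix_vector_mult_left this, of x] show ?thesis
    by (simp add: scaleR_matrix_vector_mult)
qed

lemma mlog_eigenvector: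
  fixes M :: "'n::finite cmat"
  assumes "\<forall>y. norm ((M - mat 1) *v y) \<le> r * norm y" and "0 \<le> r" and "r < 1"
    and "(M - mat 1) *v v = w *s v" and "cmod w < 1"
  shows "mlog M *v v = ln (1 + w) *s v"
proof -
  let ?a = "\<lambda>n. (-1) ^ Suc n / of_nat n * w ^ n"
  have "(\<lambda>n. ?a (Suc n)) sums ln (1 + w)"
    using sums_Suc_iff[of ?a] Ln_series[OF assms(5)] by simp
  moreover have "?a (Suc m) = complex_of_real ((-1) ^ m / real (Suc m)) * w ^ Suc m" for m
    by simp
  ultimately have "(\<lambda>m. complex_of_real ((-1) ^ m / real (Suc m)) * w ^ Suc m) sums ln (1 + w)"
    by simp
  from bounded_linear.sums[OF bounded_linear_smult_left this, of v]
  have "(\<lambda>m. ((-1) ^ m / real (Suc m)) *\<^sub>R (matpow (M - mat 1) (Suc m) *v v)) sums (ln (1 + w) *s v)"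
    unfolding matpow_eigenvector[OF assms(4)] by (simp add: scaleR_eq_smult_of_real vector_smult_assoc)
  with mlog_matrix_vector_mult_sums[OF assms(1-3)] show ?thesis
    by (rule sums_unique2)
qed

lemma mlog_lipschitz:
  fixes M N :: "'n::finite cmat"
  assumes M: "\<forall>y. norm ((M - mat 1) *v y) \<le> r * norm y"
    and N: "\<forall>y. norm ((N - mat 1) *v y) \<le> r * norm y"
    and "0 \<le> r" and "r < 1" and MN: "\<forall>y. norm (M *v y - N *v y) \<le> \<eta> * norm y" and "0 \<le> \<eta>"
  shows "norm (mlog M *v x - mlog N *v x) \<le> \<eta> / (1 - r) * norm x"
proof -
  let ?c = "\<lambda>m :: nat. (-1) ^ m / real (Suc m)"
  let ?d = "\<lambda>m. matpow (M - mat 1) (Suc m) *v x - matpow (N - mat 1) (Suc m) *v x"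
  have "(\<lambda>m. ?c m *\<^sub>R ?d m) sums (mlog M *v x - mlog N *v x)"
    using sums_diff[OF mlog_matrix_vector_mult_sums[OF M \<open>0 \<le> r\<close> \<open>r < 1\<close>]
        mlog_matrix_vector_mult_sums[OF N \<open>0 \<le> r\<close> \<open>r < 1\<close>]]
    by (simp add: scaleR_diff_right)
  then have lim: "mlog M *v x - mlog N *v x = (\<Sum>m. ?c m *\<^sub>R ?d m)"
    by (rule sums_unique)
  have MN': "\<forall>y. norm ((M - mat 1) *v y - (N - mat 1) *v y) \<le> \<eta> * norm y"
    using MN by (simp add: matrix_vector_mult_diff_rdistrib)
  have term_bound: "norm (?c m *\<^sub>R ?d m) \<le> r ^ m * (\<eta> * norm x)" for m
  proof -
    have "norm (?c m *\<^sub>R ?d m) = (1 / real (Suc m)) * norm (?d m)"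
      by (simp add: abs_mult power_abs)
    also have "\<dots> \<le> (1 / real (Suc m)) * (real (Suc m) * r ^ m * \<eta> * norm x)"
      using norm_matpow_diff_le[OF M N MN' \<open>0 \<le> r\<close> \<open>0 \<le> \<eta>\<close>, of "Suc m" x]
      by (intro mult_left_mono) auto
    finally show ?thesis
      by simp
  qed
  have "summable (\<lambda>m. r ^ m * (\<eta> * norm x))"
    using assms(3,4) by (intro summable_mult2) simp
  with term_bound have "norm (mlog M *v x - mlog N *v x) \<le> (\<Sum>m. r ^ m * (\<eta> * norm x))"
    unfolding lim by (rule norm_suminf_le)
  also have "\<dots> = \<eta> / (1 - r) * norm x"
    using assms(3,4) by (simp add: suminf_mult2[symmetric] suminf_geometric)
  finally show ?thesis .
qed


section \<open>Short-time evolution and the effective Hamiltonian\<close>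

lemma snorm_nonneg: "0 \<le> snorm M"
  unfolding snorm_def by (rule onorm_pos_le[OF matrix_vector_mul_bounded_linear])

lemma norm_exp_i_minus_1_le: "cmod (exp (\<i> * complex_of_real s) - 1) \<le> \<bar>s\<bar>"
proof -
  have "cmod (exp (\<i> * complex_of_real s) - 1) = 2 * \<bar>sin (s / 2)\<bar>"
    by (rule dist_exp_i_1)
  also have "\<dots> \<le> 2 * \<bar>s / 2\<bar>"
    using abs_sin_x_le_abs_x[of "s / 2"] by linarith
  finally show ?thesis
    by simp
qed

lemma ordered_eigensystem_abs_le_snorm:
  assumes oes: "ordered_eigensystem H lam phi" and "k < CARD('n)"
  shows "\<bar>lam k\<bar> \<le> snorm (H :: 'n::finite cmat)"
proof -
  have "norm (phi k) = 1"
    by (rule orthonormal_basis_norm[OF ordered_eigensystem_orthonormal_basis[OF oes] assms(2)])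
  moreover have "\<bar>lam k\<bar> * norm (phi k) = norm (H *v phi k)"
    using ordered_eigensystemD(2)[OF oes] assms(2) by (simp add: norm_smult_complex)
  ultimately show ?thesis
    using norm_matrix_vector_mult_le_snorm[of H "phi k"] by simp
qed

lemma evolution_eigenvector:
  fixes H :: "'n::finite cmat"
  assumes oes: "ordered_eigensystem H lam phi" and "0 \<le> t" and "k < CARD('n)"
  shows "mexp (cscale (- \<i> * complex_of_real t) H) *v phi k
           = exp (- \<i> * complex_of_real (t * lam k)) *s phi k"
proof (rule mexp_eigenvector)
  show "\<forall>y. norm (cscale (- \<i> * complex_of_real t) H *v y) \<le> (t * snorm H) * norm y"
    using \<open>0 \<le> t\<close> norm_matrix_vector_mult_le_snorm[of H]
    by (simp add: cscale_matrix_vector_mult norm_smult_complex norm_mult mult.assoc mult_left_mono)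
  show "0 \<le> t * snorm H"
    using \<open>0 \<le> t\<close> by (intro mult_nonneg_nonneg snorm_nonneg)
  show "cscale (- \<i> * complex_of_real t) H *v phi k = - \<i> * complex_of_real (t * lam k) *s phi k"
    using ordered_eigensystemD(2)[OF oes] assms(3)
    by (simp add: cscale_matrix_vector_mult vector_smult_assoc mult.assoc)
qed

lemma evolution_phase_small:
  fixes H :: "'n::finite cmat"
  assumes oes: "ordered_eigensystem H lam phi" and "0 \<le> t" and "t * (4 * snorm H) \<le> 1"
    and "k < CARD('n)"
  shows "\<bar>t * lam k\<bar> \<le> 1/4"
proof -
  have "\<bar>t * lam k\<bar> = t * \<bar>lam k\<bar>"
    using \<open>0 \<le> t\<close> by (simp add: abs_mult)
  also have "\<dots> \<le> t * snorm H"
    using ordered_eigensystem_abs_le_snorm[OF oes assms(4)] \<open>0 \<le> t\<close> by (rule mult_left_mono)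
  finally show ?thesis
    using assms(3) by simp
qed

lemma evolution_near_identity:
  fixes H :: "'n::finite cmat"
  assumes oes: "ordered_eigensystem H lam phi" and "0 \<le> t" and "t * (4 * snorm H) \<le> 1"
  shows "norm ((mexp (cscale (- \<i> * complex_of_real t) H) - mat 1) *v y) \<le> 1/4 * norm y"
proof (rule eigenbasis_norm_le[OF ordered_eigensystem_orthonormal_basis[OF oes]])
  let ?w = "\<lambda>k. exp (\<i> * complex_of_real (- (t * lam k))) - 1"
  show "\<forall>k<CARD('n). (mexp (cscale (- \<i> * complex_of_real t) H) - mat 1) *v phi k = ?w k *s phi k"
    using evolution_eigenvector[OF oes \<open>0 \<le> t\<close>]
    by (simp add: matrix_vector_mult_diff_rdistrib vector_sub_rdistrib)
  show "cmod (?w k) \<le> 1/4" if "k < CARD('n)" for k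
    using norm_exp_i_minus_1_le[of "- (t * lam k)"] evolution_phase_small[OF assms that] by simp
qed

lemma mlog_evolution:
  fixes H :: "'n::finite cmat"
  assumes oes: "ordered_eigensystem H lam phi" and "0 \<le> t" and "t * (4 * snorm H) \<le> 1"
  shows "mlog (mexp (cscale (- \<i> * complex_of_real t) H)) *v y = cscale (- \<i> * complex_of_real t) H *v y"
proof (rule eigenbasis_eq[OF ordered_eigensystem_orthonormal_basis[OF oes]])
  let ?X = "cscale (- \<i> * complex_of_real t) H"
  let ?z = "\<lambda>k. - \<i> * complex_of_real (t * lam k)"
  show "\<forall>k<CARD('n). ?X *v phi k = ?z k *s phi k"
    using ordered_eigensystemD(2)[OF oes]
    by (simp add: cscale_matrix_vector_mult vector_smult_assoc mult.assoc)
  show "\<forall>k<CARD('n). mlog (mexp ?X) *v phi k = ?z k *s phi k"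
  proof (intro allI impI)
    fix k assume k: "k < CARD('n)"
    have small: "\<bar>t * lam k\<bar> \<le> 1/4"
      by (rule evolution_phase_small[OF assms k])
    have z: "?z k = \<i> * complex_of_real (- (t * lam k))"
      by simp
    have "mlog (mexp ?X) *v phi k = ln (1 + (exp (?z k) - 1)) *s phi k"
    proof (rule mlog_eigenvector[OF allI[OF evolution_near_identity[OF assms]]])
      show "(mexp ?X - mat 1) *v phi k = (exp (?z k) - 1) *s phi k"
        using evolution_eigenvector[OF oes \<open>0 \<le> t\<close> k]
        by (simp add: matrix_vector_mult_diff_rdistrib vector_sub_rdistrib)
      show "cmod (exp (?z k) - 1) < 1"
        using norm_exp_i_minus_1_le[of "- (t * lam k)"] small unfolding z by simp
    qed simp_all
    also have "\<dots> = ?z k *s phi k"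
      using small pi_gt3 by (simp add: abs_le_iff)
    finally show "mlog (mexp ?X) *v phi k = ?z k *s phi k" .
  qed
qed


text \<open>The logarithm is Lipschitz with constant \<open>1/(1 - 7/12) = 12/5\<close> on matrices within \<open>7/12\<close>
  of the identity, and both \<open>U\<close> and \<open>Ut\<close> lie there.\<close>

lemma effective_hamiltonian_close:
  fixes H Ut :: "'n::finite cmat"
  assumes oes: "ordered_eigensystem H lam phi" and "0 < t" and "t * (4 * snorm H) \<le> 1"
    and dist: "snorm (Ut - mexp (cscale (- \<i> * complex_of_real t) H)) \<le> \<eta>" and "\<eta> \<le> 1/3"
  shows "norm (cscale (\<i> / complex_of_real t) (mlog Ut) *v y - H *v y) \<le> 12 * \<eta> / (5 * t) * norm y"
proof -
  define U where "U = mexp (cscale (- \<i> * complex_of_real t) H)"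
  have U: "\<forall>y. norm ((U - mat 1) *v y) \<le> 1/4 * norm y"
    unfolding U_def using evolution_near_identity[OF oes] assms(2,3) by simp
  have UtU: "\<forall>y. norm (Ut *v y - U *v y) \<le> \<eta> * norm y"
    using order.trans[OF norm_matrix_vector_mult_le_snorm mult_right_mono[OF dist norm_ge_zero]]
    by (simp add: U_def matrix_vector_mult_diff_rdistrib)
  have "0 \<le> \<eta>"
    using snorm_nonneg dist by (rule order.trans)
  have U': "\<forall>y. norm ((U - mat 1) *v y) \<le> 7/12 * norm y"
  proof
    fix y
    show "norm ((U - mat 1) *v y) \<le> 7/12 * norm y"
      using U[rule_format, of y] norm_ge_zero[of y] by linarith
  qed
  have Ut: "\<forall>y. norm ((Ut - mat 1) *v y) \<le> 7/12 * norm y"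
  proof
    fix y
    have "(Ut - mat 1) *v y = (Ut *v y - U *v y) + (U - mat 1) *v y"
      by (simp add: matrix_vector_mult_diff_rdistrib)
    then have "norm ((Ut - mat 1) *v y) \<le> norm (Ut *v y - U *v y) + norm ((U - mat 1) *v y)"
      by (simp only: norm_triangle_ineq)
    also have "\<dots> \<le> \<eta> * norm y + 1/4 * norm y"
      by (rule add_mono[OF UtU[rule_format] U[rule_format]])
    finally show "norm ((Ut - mat 1) *v y) \<le> 7/12 * norm y"
      using mult_right_mono[OF \<open>\<eta> \<le> 1/3\<close> norm_ge_zero[of y]] by linarith
  qed
  have "H *v y = (\<i> / complex_of_real t) *s (mlog U *v y)"
    using \<open>0 < t\<close> unfolding U_def mlog_evolution[OF oes less_imp_le[OF \<open>0 < t\<close>] assms(3)]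
    by (simp add: cscale_matrix_vector_mult vector_smult_assoc)
  then have "cscale (\<i> / complex_of_real t) (mlog Ut) *v y - H *v y
      = (\<i> / complex_of_real t) *s (mlog Ut *v y - mlog U *v y)"
    by (simp add: cscale_matrix_vector_mult vector_ssub_ldistrib)
  then have "norm (cscale (\<i> / complex_of_real t) (mlog Ut) *v y - H *v y)
      = 1 / t * norm (mlog Ut *v y - mlog U *v y)"
    by (simp only: norm_smult_complex) (use \<open>0 < t\<close> in \<open>simp add: norm_divide\<close>)
  also have "\<dots> \<le> 1 / t * (\<eta> / (1 - 7/12) * norm y)"
    using \<open>0 < t\<close> by (intro mult_left_mono mlog_lipschitz[OF Ut U' _ _ UtU \<open>0 \<le> \<eta>\<close>]) simp_all
  also have "\<dots> = 12 * \<eta> / (5 * t) * norm y"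
    by simp
  finally show ?thesis .
qed

section \<open>Perturbation of eigenvectors\<close>

lemma eigenbasis_overlap_bound:
  fixes f :: "nat \<Rightarrow> complex ^ 'n::finite"
  assumes onb: "orthonormal_basis f"
    and eig: "\<forall>k<CARD('n). A *v f k = complex_of_real (lam k) *s f k"
    and "j < CARD('n)" and "norm x = 1"
    and residual: "norm (A *v x - complex_of_real \<mu> *s x) \<le> \<delta>"
    and "0 < g" and isolated: "\<And>k. k < CARD('n) \<Longrightarrow> k \<noteq> j \<Longrightarrow> g \<le> \<bar>lam k - \<mu>\<bar>"
  shows "1 - (cmod (cinner (f j) x))\<^sup>2 \<le> (\<delta> / g)\<^sup>2"
proof -
  let ?c = "\<lambda>k. (cmod (cinner (f k) x))\<^sup>2"
  have expansion: "A *v x - complex_of_real \<mu> *s x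
      = (\<Sum>k<CARD('n). (complex_of_real (lam k - \<mu>) * cinner (f k) x) *s f k)"
    using eigenbasis_matrix_vector_mult[OF onb eig, of x]
      arg_cong[OF orthonormal_basis_expansion[OF onb, of x], of "\<lambda>v. complex_of_real \<mu> *s v"]
    by (simp add: smult_sum_right vector_smult_assoc vec_eq_iff sum_component sum_subtractf
        algebra_simps)
  have "(norm (A *v x - complex_of_real \<mu> *s x))\<^sup>2 = (\<Sum>k<CARD('n). (lam k - \<mu>)\<^sup>2 * ?c k)"
    unfolding expansion parseval_combination[OF onb] by (simp add: norm_mult power_mult_distrib del: of_real_diff)
  then have "(\<Sum>k<CARD('n). (lam k - \<mu>)\<^sup>2 * ?c k) \<le> \<delta>\<^sup>2"
    using power_mono[OF residual norm_ge_zero, of 2] by simp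
  moreover have "g\<^sup>2 * (1 - ?c j) \<le> (\<Sum>k<CARD('n). (lam k - \<mu>)\<^sup>2 * ?c k)"
  proof -
    have "1 - ?c j = (\<Sum>k\<in>{..<CARD('n)} - {j}. ?c k)"
      using parseval[OF onb, of x] sum.remove[of "{..<CARD('n)}" j ?c] assms(3,4) by simp
    then have "g\<^sup>2 * (1 - ?c j) = (\<Sum>k\<in>{..<CARD('n)} - {j}. g\<^sup>2 * ?c k)"
      by (simp add: sum_distrib_left)
    also have "\<dots> \<le> (\<Sum>k\<in>{..<CARD('n)} - {j}. (lam k - \<mu>)\<^sup>2 * ?c k)"
      using isolated \<open>0 < g\<close>
      by (intro sum_mono mult_right_mono) (auto simp: abs_le_square_iff[symmetric])
    also have "\<dots> \<le> (\<Sum>k<CARD('n). (lam k - \<mu>)\<^sup>2 * ?c k)"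
      by (intro sum_mono2) auto
    finally show ?thesis .
  qed
  ultimately show ?thesis
    using \<open>0 < g\<close> by (simp add: power_divide field_simps mult.commute)
qed

lemma spec_gap_eq_infinity_iff: "spec_gap lam d j = \<infinity> \<longleftrightarrow> j = 0 \<and> j + 1 = d"
  by (simp add: spec_gap_def min_def)

lemma spec_gap_le_abs_diff:
  assumes sorted: "\<And>k l. k \<le> l \<Longrightarrow> l < d \<Longrightarrow> lam k \<le> lam l"
    and gap: "spec_gap lam d j = ereal \<gamma>" and "j < d" and "k < d" and "k \<noteq> j"
  shows "\<gamma> \<le> \<bar>lam k - lam j\<bar>"
proof (cases "k < j")
  case True
  then have "\<gamma> \<le> \<bar>lam j - lam (j - 1)\<bar>"
    using gap by (auto simp: spec_gap_def min_def split: if_splits)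
  moreover have "lam k \<le> lam (j - 1)" and "lam (j - 1) \<le> lam j"
    using True \<open>j < d\<close> by (auto intro!: sorted)
  ultimately show ?thesis
    by simp
next
  case False
  then have "j + 1 \<le> k"
    using \<open>k \<noteq> j\<close> by simp
  then have "\<gamma> \<le> \<bar>lam j - lam (j + 1)\<bar>"
    using gap \<open>k < d\<close> by (auto simp: spec_gap_def min_def split: if_splits)
  moreover have "lam (j + 1) \<le> lam k" and "lam j \<le> lam (j + 1)"
    using \<open>j + 1 \<le> k\<close> \<open>k < d\<close> by (auto intro!: sorted)
  ultimately show ?thesis
    by simp
qed


lemma ordered_eigensystem_eigenvector_perturbation:
  fixes A B :: "'n::finite cmat"
  assumes oa: "ordered_eigensystem A la pa" and ob: "ordered_eigensystem B lb pb"
    and j: "j < CARD('n)" and gap: "spec_gap la CARD('n) j = ereal \<gamma>" and "\<delta> < \<gamma>"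
    and close: "\<forall>y. norm (B *v y - A *v y) \<le> \<delta> * norm y"
    and eig: "B *v x = complex_of_real (lb j) *s x" and "norm x = 1"
  shows "1 - (cmod (cinner (pa j) x))\<^sup>2 \<le> (\<delta> / (\<gamma> - \<delta>))\<^sup>2"
proof -
  have "\<forall>y. norm (A *v y - B *v y) \<le> \<delta> * norm y"
    using close by (simp add: norm_minus_commute)
  then have "lb j \<le> la j + \<delta>"
    by (rule ordered_eigensystem_perturbation[OF oa ob j])
  moreover have "la j \<le> lb j + \<delta>"
    by (rule ordered_eigensystem_perturbation[OF ob oa j close])
  ultimately have "\<bar>lb j - la j\<bar> \<le> \<delta>"
    by linarith
  have "norm (A *v x - complex_of_real (lb j) *s x) = norm (B *v x - A *v x)"
    by (simp add: eig norm_minus_commute)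
  with close \<open>norm x = 1\<close> have residual: "norm (A *v x - complex_of_real (lb j) *s x) \<le> \<delta>"
    by (metis mult.right_neutral)
  show ?thesis
  proof (rule eigenbasis_overlap_bound[OF ordered_eigensystem_orthonormal_basis[OF oa]
        ordered_eigensystemD(2)[OF oa] j \<open>norm x = 1\<close> residual])
    show "0 < \<gamma> - \<delta>"
      using \<open>\<delta> < \<gamma>\<close> by simp
    show "\<gamma> - \<delta> \<le> \<bar>la k - lb j\<bar>" if "k < CARD('n)" and "k \<noteq> j" for k
      using spec_gap_le_abs_diff[OF ordered_eigensystemD(1)[OF oa] gap j that]
        \<open>\<bar>lb j - la j\<bar> \<le> \<delta>\<close> by linarith
  qed
qed

lemma gap_ratio_le:
  fixes \<epsilon> \<gamma> :: real
  assumes "0 \<le> \<epsilon>" and "\<epsilon> \<le> \<gamma> / 2"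
  shows "(4 * \<epsilon> / 15) / (\<gamma> - 4 * \<epsilon> / 15) \<le> pi * \<epsilon> / \<gamma>"
proof (cases "\<epsilon> = 0")
  case False
  then have "0 < \<epsilon>" and "0 < \<gamma>"
    using assms by auto
  have "(4 * \<epsilon> / 15) / (\<gamma> - 4 * \<epsilon> / 15) \<le> (4 * \<epsilon> / 15) / (13 * \<gamma> / 15)"
    using assms \<open>0 < \<epsilon>\<close> \<open>0 < \<gamma>\<close> by (intro divide_left_mono) auto
  also have "\<dots> \<le> 3 * \<epsilon> / \<gamma>"
    using \<open>0 < \<epsilon>\<close> \<open>0 < \<gamma>\<close> by (simp add: field_simps)
  also have "\<dots> \<le> pi * \<epsilon> / \<gamma>"
    using pi_gt3 \<open>0 < \<epsilon>\<close> \<open>0 < \<gamma>\<close> by (intro divide_right_mono mult_right_mono) auto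
  finally show ?thesis .
qed simp

text \<open>The argument even yields
  the constant \<open>4/13\<close> in place of \<open>\<pi>\<close>.\<close>

theorem proposition2:
  fixes H Ut :: "'n::finite cmat"
    and lam mu :: "nat \<Rightarrow> real"
    and phi psi :: "nat \<Rightarrow> complex ^ 'n"
    and phit :: "complex ^ 'n"
    and t \<epsilon> :: real and j :: nat
  assumes "hermitian H"
    and "ordered_eigensystem H lam phi"
    and "j < CARD('n)"
    and "spec_gap lam CARD('n) j > 0"
    and "0 < t" and "t * (4 * snorm H) \<le> 1"
    and "unitary Ut"
    and "snorm (Ut - mexp (cscale (- \<i> * complex_of_real t) H)) \<le> t * \<epsilon> / 9"
    and "t * \<epsilon> / 9 \<le> 1 / 3"
    and "0 \<le> \<epsilon>" and "ereal \<epsilon> \<le> spec_gap lam CARD('n) j / 2"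
    and "ordered_eigensystem (cscale (\<i> / complex_of_real t) (mlog Ut)) mu psi"
    and "cscale (\<i> / complex_of_real t) (mlog Ut) *v phit = complex_of_real (mu j) *s phit"
    and "norm phit = 1"
  shows "ereal ((cmod (cinner (phi j) phit))\<^sup>2)
           \<ge> 1 - ereal ((pi * \<epsilon>)\<^sup>2) / (spec_gap lam CARD('n) j)\<^sup>2"
proof -
  let ?Ht = "cscale (\<i> / complex_of_real t) (mlog Ut)"
  define \<delta> where "\<delta> = 4 * \<epsilon> / 15"
  have "12 * (t * \<epsilon> / 9) / (5 * t) = \<delta>"
    using \<open>0 < t\<close> by (simp add: \<delta>_def)
  then have close: "\<forall>y. norm (?Ht *v y - H *v y) \<le> \<delta> * norm y"
    using effective_hamiltonian_close[OF assms(2,5,6,8,9)] by simp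
  show ?thesis
  proof (cases "spec_gap lam CARD('n) j")
    case (real \<gamma>)
    have "\<gamma> > 0" and "\<epsilon> \<le> \<gamma> / 2"
      using assms(4,11) real by simp_all
    have "1 - (cmod (cinner (phi j) phit))\<^sup>2 \<le> (\<delta> / (\<gamma> - \<delta>))\<^sup>2"
      by (rule ordered_eigensystem_eigenvector_perturbation[OF assms(2,12,3) real _ close assms(13,14)])
        (use \<open>\<epsilon> \<le> \<gamma> / 2\<close> \<open>0 < \<gamma>\<close> in \<open>simp add: \<delta>_def\<close>)
    also have "\<dots> \<le> (pi * \<epsilon> / \<gamma>)\<^sup>2"
      using gap_ratio_le[OF \<open>0 \<le> \<epsilon>\<close> \<open>\<epsilon> \<le> \<gamma> / 2\<close>] \<open>\<epsilon> \<le> \<gamma> / 2\<close> \<open>0 \<le> \<epsilon>\<close>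
      by (intro power_mono) (auto simp: \<delta>_def)
    finally have "1 - (pi * \<epsilon>)\<^sup>2 / \<gamma>\<^sup>2 \<le> (cmod (cinner (phi j) phit))\<^sup>2"
      by (simp add: power_divide)
    moreover have "1 - ereal ((pi * \<epsilon>)\<^sup>2) / (ereal \<gamma>)\<^sup>2 = ereal (1 - (pi * \<epsilon>)\<^sup>2 / \<gamma>\<^sup>2)"
      using \<open>0 < \<gamma>\<close> by (simp add: power2_eq_square, simp add: one_ereal_def)
    ultimately show ?thesis
      using real by simp
  next
    case PInf
    then have "CARD('n) = 1" and "j = 0"
      by (simp_all add: spec_gap_eq_infinity_iff)
    then show ?thesis
      using parseval[OF ordered_eigensystem_orthonormal_basis[OF assms(2)], of phit] assms(14) PInf
      by simp
  qed (use assms(4) in simp)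
qed

end
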